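(* For each $j=1,\dots,m$ and $t>0$, \[\sup_{s\le t}\left|{R_N}_j(s)-\int_0^sa_j(X(u))\,du\right|\to0\quad\text{a.s. as }N\to\infty.\]
   Context: Fix integers $n,m\ge1$, vectors $\nu_1,\dots,\nu_m\in\mathbb{Z}^n$ and $c=(c_1,\dots,c_m)$ with all $c_j>0$; $|\cdot|$ is a fixed norm. For each $N\ge1$ and $j$, $a_j^N(x)=c_jb_j^N(x)$ with $b_j^N:\mathbb{R}^n\to\mathbb{R}$ nonnegative on $\mathbb{Z}_+^n$. Standing assumptions: (i) for each $j$ and $x\in\mathbb{R}_+^n$ the limit $a_j(x)=\lim_Na_j^N(Nx)/N$ exists, and for each compact $K\subset\mathbb{R}_+^n$ there is $B_K>0$ with $|a_j^N(Nx)/N-a_j(x)|\le B_K/N$ for $x\in K$, $N\ge1$, all $j$; (ii) each $a_j$ is continuously differentiable on $\mathbb{R}^n$; (iii) $x_0\in\mathbb{R}_+^n$ is fixed, $N$ ranges over positive integers with $Nx_0\in\mathbb{Z}_+^n$, and on a probability space with independent unit-rate Poisson processes $Y_1,\dots,Y_m$, $X^N$ solves $X^N(t)=Nx_0+\sum_jY_j\big(\int_0^ta_j^N(X^N(s))ds\big)\nu_j$; (iv) with $X_N(t)=X^N(t)/N$, there is $\Gamma$ with $|X_N(t)|\le\Gamma$ a.s. for all $t\ge0$, $N$. $X$ is the solution of $X(t)=x_0+\sum_j\nu_j\int_0^ta_j(X(s))ds$, $t\ge0$. $R_j^N(t)=Y_j\big(\int_0^ta_j^N(X^N(s))ds\big)$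 and ${R_N}_j(t)=R_j^N(t)/N$. *)

theory Defs
  imports "HOL-Analysis.Analysis" "HOL-Probability.Probability"
begin

definition Zplus :: "(real ^ 'n) set" where
  "Zplus = {x. \<forall>i. x $ i \<in> \<nat>}"

definition Rplus :: "(real ^ 'n) set" where
  "Rplus = {x. \<forall>i. 0 \<le> x $ i}"

definition unit_poisson_process :: "'a measure \<Rightarrow> ('a \<Rightarrow> real \<Rightarrow> real) \<Rightarrow> bool" where
  "unit_poisson_process M Y \<longleftrightarrow>
     (\<forall>t\<ge>0. (\<lambda>\<omega>. Y \<omega> t) \<in> borel_measurable M) \<and>
     (\<forall>\<omega>\<in>space M. Y \<omega> 0 = 0 \<and> mono_on {0..} (Y \<omega>) \<and>
        (\<forall>t\<ge>0. Y \<omega> t \<in> \<nat> \<and> continuous (at_right t) (Y \<omega>))) \<and>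
     (\<forall>s t. 0 \<le> s \<and> s < t \<longrightarrow>
        (\<forall>k::nat. measure M {\<omega>\<in>space M. Y \<omega> t - Y \<omega> s = real k}
                  = pmf (poisson_pmf (t - s)) k)) \<and>
     (\<forall>(\<tau>::nat \<Rightarrow> real) k. 0 \<le> \<tau> 0 \<and> (\<forall>i<k. \<tau> i < \<tau> (Suc i)) \<longrightarrow>
        prob_space.indep_vars M (\<lambda>_. borel) (\<lambda>i \<omega>. Y \<omega> (\<tau> (Suc i)) - Y \<omega> (\<tau> i)) {..<k})"

end

theory Submission
  imports Defs
begin

text \<open>A Chernoff bound gives \<open>P(|Y(n) - n| \<ge> \<epsilon> n) \<le> 2 exp(-n \<epsilon>\<^sup>2/4)\<close> for a unit-rate Poisson
  process \<open>Y\<close>, so \<open>Y(n)/n \<rightarrow> 1\<close> almost surely by Borel-Cantelli, and by monotonicity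
  \<open>|Y(l) - l| \<le> \<eta> N\<close> for all \<open>l \<le> c N\<close> once \<open>N\<close> is large. On such paths the scaled state
  \<open>X\<^sup>N/N\<close> solves the integral equation of \<open>X\<close> up to an error \<open>\<eta> + t B\<^sub>K/N\<close>, coming from the
  Poisson fluctuations and from the rates. The \<open>a\<^sub>j\<close> are Lipschitz on a compact set containing both
  paths, so a Gronwall argument bounds \<open>|R\<^sub>N\<^sub>j(s) - \<integral>\<^sub>0\<^sup>s a\<^sub>j(X)|\<close> uniformly on \<open>[0, t]\<close> by a
  constant times \<open>\<eta> + t B\<^sub>K/N\<close>.\<close>

section \<open>Deviations of a unit-rate Poisson process\<close>

lemma exp_neg_le_quadratic:
  fixes x :: real
  assumes "0 \<le> x" "x \<le> 1"
  shows "exp (-x) \<le> 1 - x + x\<^sup>2"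
proof -
  have "exp (-x) \<le> 1 / (1 + x)"
    using exp_ge_add_one_self[of x] assms by (simp add: exp_minus field_simps)
  also have "\<dots> \<le> 1 - x + x\<^sup>2"
  proof -
    have "1 \<le> (1 + x) * (1 - x + x\<^sup>2)"
      using assms by (simp add: power2_eq_square algebra_simps)
    then show ?thesis
      using assms by (simp add: field_simps)
  qed
  finally show ?thesis .
qed

lemma poisson_exp_moment_sums:
  fixes l \<theta> :: real
  assumes "0 < l"
  shows "(\<lambda>k. exp (\<theta> * real k) * pmf (poisson_pmf l) k) sums exp (l * (exp \<theta> - 1))"
proof -
  have "(\<lambda>k. (l * exp \<theta>) ^ k /\<^sub>R fact k * exp (-l)) sums (exp (l * exp \<theta>) * exp (-l))"
    by (intro sums_mult2 exp_converges)
  moreover have "exp (l * exp \<theta>) * exp (-l) = exp (l * (exp \<theta> - 1))"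
    by (simp add: exp_diff exp_minus field_simps)
  moreover have "(l * exp \<theta>) ^ k /\<^sub>R fact k * exp (-l) = exp (\<theta> * real k) * pmf (poisson_pmf l) k" for k
    using assms by (simp add: power_mult_distrib exp_of_nat2_mult[symmetric] field_simps)
  ultimately show ?thesis
    by simp
qed

lemma chernoff_two_sided_weight_ge_one:
  fixes \<theta> d x :: real
  assumes "0 \<le> \<theta>" "d \<le> \<bar>x\<bar>"
  shows "1 \<le> exp (\<theta> * (x - d)) + exp (\<theta> * (- x - d))"
proof -
  have "0 \<le> x - d \<or> 0 \<le> - x - d"
    using assms(2) by linarith
  then have "1 \<le> exp (\<theta> * (x - d)) \<or> 1 \<le> exp (\<theta> * (- x - d))"
    using assms(1) by auto
  moreover have "0 < exp (\<theta> * (x - d))" "0 < exp (\<theta> * (- x - d))"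
    by simp_all
  ultimately show ?thesis
    by linarith
qed

text \<open>Chernoff bound: the indicator of \<open>|k - l| \<ge> \<epsilon> l\<close> is dominated by
  \<open>exp(\<theta>(k - l - \<epsilon> l)) + exp(\<theta>(l - k - \<epsilon> l))\<close> with \<open>\<theta> = \<epsilon>/2\<close>, whose Poisson means are explicit.\<close>

lemma poisson_deviation_prob_le:
  fixes M :: "'w measure" and Z :: "'w \<Rightarrow> real" and l \<epsilon> :: real
  assumes "prob_space M" and Z_meas: "Z \<in> borel_measurable M"
    and Z_nat: "\<forall>\<omega>\<in>space M. Z \<omega> \<in> \<nat>"
    and Z_distr: "\<forall>k::nat. measure M {\<omega>\<in>space M. Z \<omega> = real k} = pmf (poisson_pmf l) k"
    and l: "0 < l" and \<epsilon>: "0 < \<epsilon>" "\<epsilon> \<le> 1"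
  shows "measure M {\<omega>\<in>space M. \<epsilon> * l \<le> \<bar>Z \<omega> - l\<bar>} \<le> 2 * exp (- l * \<epsilon>\<^sup>2 / 4)"
proof -
  interpret prob_space M by fact
  define A where "A k = {\<omega>\<in>space M. Z \<omega> = real k \<and> \<epsilon> * l \<le> \<bar>real k - l\<bar>}" for k :: nat
  have "(\<Union>k. A k) = {\<omega>\<in>space M. \<epsilon> * l \<le> \<bar>Z \<omega> - l\<bar>}"
    using Z_nat by (auto simp: A_def elim!: Nats_cases)
  moreover have "range A \<subseteq> sets M" "disjoint_family A"
    using Z_meas by (auto simp: A_def disjoint_family_on_def)
  ultimately have A_sums: "(\<lambda>k. measure M (A k)) sums measure M {\<omega>\<in>space M. \<epsilon> * l \<le> \<bar>Z \<omega> - l\<bar>}"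
    using finite_measure_UNION by metis
  define \<theta> where "\<theta> = \<epsilon> / 2"
  have \<theta>: "0 < \<theta>" "\<theta> \<le> 1"
    using \<epsilon> by (auto simp: \<theta>_def)
  define g where "g k = exp (- \<theta> * (1 + \<epsilon>) * l) * (exp (\<theta> * real k) * pmf (poisson_pmf l) k)
       + exp (\<theta> * (1 - \<epsilon>) * l) * (exp ((-\<theta>) * real k) * pmf (poisson_pmf l) k)" for k
  have g_sums: "g sums (exp (- \<theta> * (1 + \<epsilon>) * l + l * (exp \<theta> - 1))
      + exp (\<theta> * (1 - \<epsilon>) * l + l * (exp (-\<theta>) - 1)))"
    unfolding g_def exp_add by (intro sums_add sums_mult poisson_exp_moment_sums l)
  have "measure M (A k) \<le> g k" for k
  proof (cases "\<epsilon> * l \<le> \<bar>real k - l\<bar>")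
    case True
    have "1 \<le> exp (\<theta> * ((real k - l) - \<epsilon> * l)) + exp (\<theta> * (- (real k - l) - \<epsilon> * l))"
      using True \<theta> by (intro chernoff_two_sided_weight_ge_one) auto
    then have "pmf (poisson_pmf l) k \<le> g k"
      unfolding g_def using mult_right_mono[OF _ pmf_nonneg]
      by (fastforce simp: algebra_simps simp flip: exp_add)
    then show ?thesis
      using Z_distr True by (simp add: A_def)
  next
    case False
    then show ?thesis
      by (simp add: A_def g_def)
  qed
  then have "measure M {\<omega>\<in>space M. \<epsilon> * l \<le> \<bar>Z \<omega> - l\<bar>}
      \<le> exp (- \<theta> * (1 + \<epsilon>) * l + l * (exp \<theta> - 1)) + exp (\<theta> * (1 - \<epsilon>) * l + l * (exp (-\<theta>) - 1))"
    using sums_le[OF _ A_sums g_sums] by blast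
  also have "\<dots> \<le> exp (- l * \<epsilon>\<^sup>2 / 4) + exp (- l * \<epsilon>\<^sup>2 / 4)"
  proof (intro add_mono exp_mono)
    have "l * (exp \<theta> - 1) \<le> l * (\<theta> + \<theta>\<^sup>2)"
      using exp_bound[of \<theta>] \<theta> l by (intro mult_left_mono) auto
    then show "- \<theta> * (1 + \<epsilon>) * l + l * (exp \<theta> - 1) \<le> - l * \<epsilon>\<^sup>2 / 4"
      by (simp add: \<theta>_def power2_eq_square field_simps)
    have "l * (exp (-\<theta>) - 1) \<le> l * (- \<theta> + \<theta>\<^sup>2)"
      using exp_neg_le_quadratic[of \<theta>] \<theta> l by (intro mult_left_mono) auto
    then show "\<theta> * (1 - \<epsilon>) * l + l * (exp (-\<theta>) - 1) \<le> - l * \<epsilon>\<^sup>2 / 4"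
      by (simp add: \<theta>_def power2_eq_square field_simps)
  qed
  finally show ?thesis
    by simp
qed

lemma unit_poisson_process_deviation_AE:
  fixes M :: "'w measure" and Y :: "'w \<Rightarrow> real \<Rightarrow> real" and e :: real
  assumes "prob_space M" "unit_poisson_process M Y" and e: "0 < e" "e \<le> 1"
  shows "AE \<omega> in M. eventually (\<lambda>n::nat. \<bar>Y \<omega> (real n) - real n\<bar> < e * real n) sequentially"
proof -
  interpret prob_space M by fact
  have meas: "(\<lambda>\<omega>. Y \<omega> t) \<in> borel_measurable M" if "0 \<le> t" for t
    using assms(2) that unfolding unit_poisson_process_def by blast
  have path: "\<forall>\<omega>\<in>space M. Y \<omega> 0 = 0 \<and> (\<forall>t\<ge>0. Y \<omega> t \<in> \<nat>)"
    using assms(2) unfolding unit_poisson_process_def by blast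
  have distr: "measure M {\<omega>\<in>space M. Y \<omega> (real n) = real k} = pmf (poisson_pmf (real n)) k"
    if "0 < n" for n k
  proof -
    have "{\<omega>\<in>space M. Y \<omega> (real n) = real k} = {\<omega>\<in>space M. Y \<omega> (real n) - Y \<omega> 0 = real k}"
      using path by auto
    then show ?thesis
      using assms(2) that unfolding unit_poisson_process_def by simp
  qed
  define A where "A n = {\<omega>\<in>space M. e * real n \<le> \<bar>Y \<omega> (real n) - real n\<bar>}" for n :: nat
  have A_sets: "A n \<in> sets M" for n
    using meas[of "real n"] unfolding A_def by measurable
  have A_le: "measure M (A n) \<le> 2 * exp (- e\<^sup>2 / 4) ^ n" for n
  proof (cases "n = 0")
    case True
    then show ?thesis
      using prob_le_1[of "A 0"] by (simp del: prob_le_1)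
  next
    case False
    have "measure M (A n) \<le> 2 * exp (- real n * e\<^sup>2 / 4)"
      unfolding A_def using False e meas path distr
      by (intro poisson_deviation_prob_le prob_space_axioms) auto
    also have "exp (- real n * e\<^sup>2 / 4) = exp (- e\<^sup>2 / 4) ^ n"
      by (simp flip: exp_of_nat_mult)
    finally show ?thesis .
  qed
  have "summable (\<lambda>n. measure M (A n))"
    using A_le e by (intro summable_comparison_test[OF _ summable_mult[OF summable_geometric]]) auto
  then have "AE \<omega> in M. eventually (\<lambda>n. \<omega> \<in> space M - A n) sequentially"
    using A_sets by (intro borel_cantelli_AE1) (auto simp: less_top[symmetric])
  then show ?thesis
    by (rule AE_mp) (auto elim!: eventually_mono simp: A_def)
qed

lemma unit_poisson_process_lln:
  fixes M :: "'w measure" and Y :: "'w \<Rightarrow> real \<Rightarrow> real"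
  assumes "prob_space M" "unit_poisson_process M Y"
  shows "AE \<omega> in M. (\<lambda>n. Y \<omega> (real n) / real n) \<longlonglongrightarrow> 1"
proof -
  have "AE \<omega> in M. \<forall>m::nat. eventually
      (\<lambda>n::nat. \<bar>Y \<omega> (real n) - real n\<bar> < 1 / real (Suc m) * real n) sequentially"
    unfolding AE_all_countable using assms by (intro allI unit_poisson_process_deviation_AE) auto
  then show ?thesis
  proof (rule AE_mp, intro AE_I2 impI tendstoI)
    fix \<omega> and \<epsilon> :: real
    assume dev: "\<forall>m::nat. eventually
      (\<lambda>n::nat. \<bar>Y \<omega> (real n) - real n\<bar> < 1 / real (Suc m) * real n) sequentially"
      and "0 < \<epsilon>"
    then obtain m where m: "1 / real (Suc m) < \<epsilon>"
      using nat_approx_posE by blast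
    show "eventually (\<lambda>n. dist (Y \<omega> (real n) / real n) 1 < \<epsilon>) sequentially"
      using dev[rule_format, of m] eventually_gt_at_top[of 0]
    proof eventually_elim
      case (elim n)
      then have "\<bar>Y \<omega> (real n) / real n - 1\<bar> = \<bar>Y \<omega> (real n) - real n\<bar> / real n"
        by (simp add: abs_divide field_simps)
      also have "\<dots> < 1 / real (Suc m)"
        using elim by (simp add: field_simps)
      finally have "\<bar>Y \<omega> (real n) / real n - 1\<bar> < 1 / real (Suc m)" .
      then show ?case
        using m by (simp add: dist_real_def)
    qed
  qed
qed

lemma mono_sublinear_deviation:
  fixes y :: "real \<Rightarrow> real" and \<delta> :: real
  assumes mono: "mono_on {0..} y" and lim: "(\<lambda>n. y (real n) / real n) \<longlonglongrightarrow> 1" and "0 < \<delta>"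
  shows "\<exists>K. \<forall>l\<ge>0. \<bar>y l - l\<bar> \<le> \<delta> * l + K"
proof -
  have "eventually (\<lambda>n. dist (y (real n) / real n) 1 < \<delta> \<and> 1 \<le> n) sequentially"
    using tendstoD[OF lim \<open>0 < \<delta>\<close>] eventually_ge_at_top[of 1] by eventually_elim auto
  then obtain n0 where near: "\<And>n. n \<ge> n0 \<Longrightarrow> \<bar>y (real n) / real n - 1\<bar> < \<delta> \<and> 1 \<le> n"
    unfolding eventually_sequentially dist_real_def by blast
  have n0: "\<bar>y (real n) - real n\<bar> < \<delta> * real n" if "n \<ge> n0" for n
  proof -
    have "\<bar>y (real n) - real n\<bar> / real n < \<delta>" "0 < real n"
      using near[OF that] by (auto simp: abs_divide field_simps)
    then show ?thesis
      by (simp add: field_simps)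
  qed
  define K where "K = max (\<delta> + 1) (\<bar>y 0\<bar> + \<bar>y (real n0)\<bar> + real n0)"
  have "\<bar>y l - l\<bar> \<le> \<delta> * l + K" if l: "0 \<le> l" for l
  proof (cases "real n0 \<le> l")
    case True
    define n where "n = nat \<lfloor>l\<rfloor>"
    have n: "real n \<le> l" "l < real n + 1" "n0 \<le> n"
      using l True unfolding n_def by linarith+
    have "y (real n) \<le> y l" "y l \<le> y (real (Suc n))"
      using n l by (auto intro!: mono_onD[OF mono])
    moreover have "\<bar>y (real n) - real n\<bar> < \<delta> * real n" "\<bar>y (real (Suc n)) - real (Suc n)\<bar> < \<delta> * real (Suc n)"
      using n0[of n] n0[of "Suc n"] n(3) by auto
    moreover have "\<delta> * real n \<le> \<delta> * l" "\<delta> * real (Suc n) \<le> \<delta> * l + \<delta>"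
      using n \<open>0 < \<delta>\<close> by (auto simp: algebra_simps)
    moreover have "\<delta> + 1 \<le> K"
      unfolding K_def by simp
    ultimately show ?thesis
      using n \<open>0 < \<delta>\<close> unfolding abs_le_iff abs_less_iff of_nat_Suc by linarith
  next
    case False
    have "y 0 \<le> y l" "y l \<le> y (real n0)"
      using False l by (auto intro!: mono_onD[OF mono])
    moreover have "0 \<le> \<delta> * l" "\<bar>y 0\<bar> + \<bar>y (real n0)\<bar> + real n0 \<le> K"
      using l \<open>0 < \<delta>\<close> by (auto simp: K_def)
    ultimately show ?thesis
      using False l unfolding abs_le_iff by linarith
  qed
  then show ?thesis
    by blast
qed

lemma mono_uniform_sublinear_deviation:
  fixes y :: "real \<Rightarrow> real" and c \<epsilon> :: real
  assumes "mono_on {0..} y" "(\<lambda>n. y (real n) / real n) \<longlonglongrightarrow> 1" and "0 \<le> c" "0 < \<epsilon>"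
  shows "eventually (\<lambda>N::nat. \<forall>l\<in>{0..real N * c}. \<bar>y l - l\<bar> \<le> \<epsilon> * real N) sequentially"
proof -
  define \<delta> where "\<delta> = \<epsilon> / (2 * (c + 1))"
  have \<delta>: "0 < \<delta>" "\<delta> * c \<le> \<epsilon> / 2"
    using assms(3,4) by (auto simp: \<delta>_def field_simps)
  obtain K where K: "\<And>l. 0 \<le> l \<Longrightarrow> \<bar>y l - l\<bar> \<le> \<delta> * l + K"
    using mono_sublinear_deviation[OF assms(1,2) \<delta>(1)] by blast
  have "eventually (\<lambda>N::nat. 2 * K / \<epsilon> \<le> real N) sequentially"
    using filterlim_real_sequentially unfolding filterlim_at_top by blast
  then show ?thesis
  proof (rule eventually_mono, intro ballI)
    fix N :: nat and l
    assume N: "2 * K / \<epsilon> \<le> real N" and l: "l \<in> {0..real N * c}"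
    have "\<delta> * l \<le> \<delta> * (real N * c)"
      using l \<delta>(1) by (intro mult_left_mono) auto
    then have "\<bar>y l - l\<bar> \<le> \<delta> * (real N * c) + K"
      using K[of l] l by auto
    also have "\<dots> \<le> \<epsilon> / 2 * real N + \<epsilon> / 2 * real N"
      using \<delta>(2) N assms(4) mult_right_mono[OF \<delta>(2), of "real N"]
      by (simp add: field_simps)
    finally show "\<bar>y l - l\<bar> \<le> \<epsilon> * real N"
      by simp
  qed
qed

section \<open>Stability of the integral equation\<close>

lemma exp_scaled_has_integral:
  fixes \<kappa> s :: real
  assumes "0 < \<kappa>" "0 \<le> s"
  shows "((\<lambda>u. exp (\<kappa> * u)) has_integral (exp (\<kappa> * s) - 1) / \<kappa>) {0..s}"
proof -
  have "((\<lambda>u. exp (\<kappa> * u)) has_integral (exp (\<kappa> * s) / \<kappa> - exp (\<kappa> * 0) / \<kappa>)) {0..s}"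
  proof (rule fundamental_theorem_of_calculus[OF assms(2)])
    fix x :: real
    have "((\<lambda>u. exp (\<kappa> * u) / \<kappa>) has_real_derivative (exp (\<kappa> * x) * \<kappa> / \<kappa>)) (at x within {0..s})"
      by (auto intro!: derivative_eq_intros)
    then show "((\<lambda>u. exp (\<kappa> * u) / \<kappa>) has_vector_derivative exp (\<kappa> * x)) (at x within {0..s})"
      using assms by (simp add: has_real_derivative_iff_has_vector_derivative)
  qed
  then show ?thesis
    by (simp add: diff_divide_distrib)
qed

lemma integral_abs_le_exponential_envelope:
  fixes g :: "real \<Rightarrow> real" and b c \<kappa> s :: real
  assumes "0 < \<kappa>" "0 \<le> s" "g integrable_on {0..s}"
    and "\<And>u. u \<in> {0..s} \<Longrightarrow> \<bar>g u\<bar> \<le> b + c * exp (\<kappa> * u)"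
  shows "\<bar>integral {0..s} g\<bar> \<le> s * b + c * (exp (\<kappa> * s) - 1) / \<kappa>"
proof -
  have "((\<lambda>u. b + c * exp (\<kappa> * u)) has_integral (s * b + c * ((exp (\<kappa> * s) - 1) / \<kappa>))) {0..s}"
    using has_integral_const_real[of b 0 s] assms(2)
    by (intro has_integral_add has_integral_mult_right exp_scaled_has_integral assms(1,2)) auto
  then show ?thesis
    using integral_norm_bound_integral[OF assms(3), of "\<lambda>u. b + c * exp (\<kappa> * u)"] assms(4)
    by (auto simp: integral_unique has_integral_integrable)
qed

text \<open>The hypothesis is the integral inequality \<open>D s \<le> \<alpha> + \<beta> \<integral>\<^sub>0\<^sup>s D\<close>, tested only against
  exponential majorants \<open>\<phi> e\<^sup>\<kappa>\<^sup>u\<close> of \<open>D\<close>, so that no integrability of \<open>D\<close> is required.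
  The best such \<open>\<phi>\<close> is \<open>sup\<^sub>u e\<^sup>-\<^sup>\<kappa>\<^sup>u D u\<close>, and the hypothesis bounds it by \<open>\<alpha> + \<phi>/2\<close>.\<close>

lemma exponential_envelope_gronwall:
  fixes D :: "real \<Rightarrow> real" and \<alpha> \<beta> \<kappa> t s :: real
  assumes "0 \<le> \<alpha>" "0 \<le> \<beta>" "0 < \<kappa>" "2 * \<beta> \<le> \<kappa>"
    and D_nonneg: "\<And>u. u \<in> {0..t} \<Longrightarrow> 0 \<le> D u"
    and D_bdd: "bdd_above (D ` {0..t})"
    and D_le: "\<And>\<phi> s. (\<And>u. u \<in> {0..t} \<Longrightarrow> D u \<le> \<phi> * exp (\<kappa> * u)) \<Longrightarrow> s \<in> {0..t} \<Longrightarrow>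
        D s \<le> \<alpha> + \<beta> * \<phi> * (exp (\<kappa> * s) - 1) / \<kappa>"
    and s: "s \<in> {0..t}"
  shows "D s \<le> 2 * \<alpha> * exp (\<kappa> * s)"
proof -
  define \<phi> where "\<phi> = (SUP u\<in>{0..t}. exp (- \<kappa> * u) * D u)"
  have bdd: "bdd_above ((\<lambda>u. exp (- \<kappa> * u) * D u) ` {0..t})"
  proof -
    obtain C where "\<And>u. u \<in> {0..t} \<Longrightarrow> D u \<le> C"
      using D_bdd unfolding bdd_above_def by fast
    moreover have "exp (- \<kappa> * u) * D u \<le> D u" if "u \<in> {0..t}" for u
      using that D_nonneg[OF that] \<open>0 < \<kappa>\<close> by (simp add: mult_left_le_one_le)
    ultimately show ?thesis
      by (intro bdd_aboveI2[of _ _ C]) (blast intro: order_trans)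
  qed
  have weighted_le: "exp (- \<kappa> * u) * D u \<le> \<phi>" if "u \<in> {0..t}" for u
    unfolding \<phi>_def using bdd that by (rule cSUP_upper2) simp
  have envelope: "D u \<le> \<phi> * exp (\<kappa> * u)" if "u \<in> {0..t}" for u
    using weighted_le[OF that] by (simp add: exp_minus field_simps)
  have \<phi>_nonneg: "0 \<le> \<phi>"
    using order_trans[OF _ weighted_le[OF s]] D_nonneg[OF s] by simp
  have "\<phi> \<le> \<alpha> + \<phi> / 2"
  proof (subst (1) \<phi>_def, rule cSUP_least)
    show "{0..t} \<noteq> {}"
      using s by auto
    fix u
    assume u: "u \<in> {0..t}"
    define E where "E = exp (- \<kappa> * u)"
    have E: "0 < E" "E \<le> 1" "E * exp (\<kappa> * u) = 1"
      using u \<open>0 < \<kappa>\<close> by (auto simp: E_def simp flip: exp_add)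
    have "E * D u \<le> E * (\<alpha> + \<beta> * \<phi> * (exp (\<kappa> * u) - 1) / \<kappa>)"
      using D_le[OF envelope u] E by (intro mult_left_mono) auto
    also have "\<dots> = E * \<alpha> + \<beta> * \<phi> * (E * exp (\<kappa> * u) - E) / \<kappa>"
      by (simp add: algebra_simps add_divide_distrib diff_divide_distrib)
    also have "\<dots> = E * \<alpha> + \<beta> * \<phi> * (1 - E) / \<kappa>"
      using E(3) by simp
    also have "\<dots> \<le> \<alpha> + \<phi> / 2"
    proof (rule add_mono)
      show "E * \<alpha> \<le> \<alpha>"
        using E \<open>0 \<le> \<alpha>\<close> by (simp add: mult_left_le_one_le)
      have "\<beta> * \<phi> * (1 - E) \<le> \<kappa> / 2 * \<phi> * 1"
        using E \<open>2 * \<beta> \<le> \<kappa>\<close> \<open>0 \<le> \<beta>\<close> \<phi>_nonneg by (intro mult_mono) auto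
      then show "\<beta> * \<phi> * (1 - E) / \<kappa> \<le> \<phi> / 2"
        using \<open>0 < \<kappa>\<close> by (simp add: field_simps)
    qed
    finally show "exp (- \<kappa> * u) * D u \<le> \<alpha> + \<phi> / 2"
      by (simp add: E_def)
  qed
  then have "\<phi> \<le> 2 * \<alpha>"
    by simp
  then show ?thesis
    using order_trans[OF envelope[OF s] mult_right_mono[OF _ exp_ge_zero]] by blast
qed

lemma gronwall_factor_le:
  fixes A b \<kappa> s t :: real
  assumes "0 \<le> A" "0 \<le> b" "2 * b \<le> \<kappa>" "s \<in> {0..t}"
  shows "A + A * (2 * b / \<kappa>) * (exp (\<kappa> * s) - 1) \<le> 2 * exp (\<kappa> * t) * A"
proof -
  have "\<kappa> * s \<le> \<kappa> * t"
    using assms by (intro mult_left_mono) auto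
  then have "exp (\<kappa> * s) \<le> exp (\<kappa> * t)"
    by (simp only: exp_le_cancel_iff)
  then have "exp (\<kappa> * s) - 1 \<le> exp (\<kappa> * t)"
    by linarith
  moreover have "1 \<le> exp (\<kappa> * t)"
    using assms by simp
  moreover have "2 * b / \<kappa> \<le> 1"
    using assms by (cases "\<kappa> = 0") (auto simp: divide_le_eq)
  ultimately have "A * (2 * b / \<kappa>) * (exp (\<kappa> * s) - 1) \<le> A * 1 * exp (\<kappa> * t)"
    using assms by (intro mult_mono) auto
  moreover have "A \<le> A * exp (\<kappa> * t)"
    using \<open>1 \<le> exp (\<kappa> * t)\<close> \<open>0 \<le> A\<close> mult_left_mono[of 1 "exp (\<kappa> * t)" A] by simp
  ultimately show ?thesis
    by (simp add: algebra_simps)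
qed

lemma integral_equation_stability:
  fixes \<nu> :: "'m::finite \<Rightarrow> 'v::real_normed_vector" and a :: "'m \<Rightarrow> 'v \<Rightarrow> real"
    and R g :: "'m \<Rightarrow> real \<Rightarrow> real" and z X :: "real \<Rightarrow> 'v" and x0 :: 'v
    and t \<epsilon> \<delta> L s :: real and j :: 'm
  assumes "0 \<le> \<epsilon>" "0 \<le> \<delta>" "0 \<le> L"
    and z_eq: "\<And>s. s \<in> {0..t} \<Longrightarrow> z s = x0 + (\<Sum>k\<in>UNIV. R k s *\<^sub>R \<nu> k)"
    and X_eq: "\<And>s. s \<in> {0..t} \<Longrightarrow> X s = x0 + (\<Sum>k\<in>UNIV. integral {0..s} (\<lambda>u. a k (X u)) *\<^sub>R \<nu> k)"
    and g_int: "\<And>k s. s \<in> {0..t} \<Longrightarrow> g k integrable_on {0..s}"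
    and aX_int: "\<And>k s. s \<in> {0..t} \<Longrightarrow> (\<lambda>u. a k (X u)) integrable_on {0..s}"
    and R_g: "\<And>k s. s \<in> {0..t} \<Longrightarrow> \<bar>R k s - integral {0..s} (g k)\<bar> \<le> \<epsilon>"
    and g_a: "\<And>k u. u \<in> {0..t} \<Longrightarrow> \<bar>g k u - a k (z u)\<bar> \<le> \<delta>"
    and lip: "\<And>k u. u \<in> {0..t} \<Longrightarrow> \<bar>a k (z u) - a k (X u)\<bar> \<le> L * norm (z u - X u)"
    and bdd: "bounded ((\<lambda>u. z u - X u) ` {0..t})"
    and s: "s \<in> {0..t}"
  shows "\<bar>R j s - integral {0..s} (\<lambda>u. a j (X u))\<bar>
    \<le> 2 * exp ((2 * (\<Sum>k\<in>UNIV. norm (\<nu> k)) * L + 1) * t) * (\<epsilon> + t * \<delta>)"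
proof -
  define V where "V = (\<Sum>k\<in>UNIV. norm (\<nu> k))"
  define \<kappa> where "\<kappa> = 2 * V * L + 1"
  define T where "T k s = R k s - integral {0..s} (\<lambda>u. a k (X u))" for k s
  have V: "0 \<le> V"
    by (simp add: V_def sum_nonneg)
  have \<kappa>: "0 < \<kappa>" "2 * (V * L) \<le> \<kappa>"
    using mult_nonneg_nonneg[OF V \<open>0 \<le> L\<close>] by (auto simp: \<kappa>_def)
  have T_le: "\<bar>T k s\<bar> \<le> \<epsilon> + s * \<delta> + L * \<phi> * (exp (\<kappa> * s) - 1) / \<kappa>"
    if envelope: "\<And>u. u \<in> {0..t} \<Longrightarrow> norm (z u - X u) \<le> \<phi> * exp (\<kappa> * u)" and s: "s \<in> {0..t}"
    for k s \<phi>
  proof -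
    have "{0..s} \<subseteq> {0..t}"
      using s by auto
    then have "\<bar>g k u - a k (X u)\<bar> \<le> \<delta> + L * \<phi> * exp (\<kappa> * u)" if "u \<in> {0..s}" for u
      using g_a[of u k] lip[of u k] mult_left_mono[OF envelope[of u] \<open>0 \<le> L\<close>] that by auto
    then have "\<bar>integral {0..s} (\<lambda>u. g k u - a k (X u))\<bar> \<le> s * \<delta> + L * \<phi> * (exp (\<kappa> * s) - 1) / \<kappa>"
      using s \<kappa> g_int[OF s] aX_int[OF s]
      by (intro integral_abs_le_exponential_envelope integrable_diff) auto
    moreover have "T k s = (R k s - integral {0..s} (g k)) + integral {0..s} (\<lambda>u. g k u - a k (X u))"
      unfolding T_def using g_int[OF s] aX_int[OF s] by (simp add: integral_diff)
    ultimately show ?thesis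
      using R_g[OF s, of k] by linarith
  qed
  have D_le: "norm (z s - X s) \<le> V * (\<epsilon> + t * \<delta>) + V * L * \<phi> * (exp (\<kappa> * s) - 1) / \<kappa>"
    if envelope: "\<And>u. u \<in> {0..t} \<Longrightarrow> norm (z u - X u) \<le> \<phi> * exp (\<kappa> * u)" and s: "s \<in> {0..t}"
    for s \<phi>
  proof -
    have "norm (z s - X s) = norm (\<Sum>k\<in>UNIV. T k s *\<^sub>R \<nu> k)"
      using z_eq[OF s] X_eq[OF s] by (simp add: T_def sum_subtractf[symmetric] scaleR_diff_left)
    also have "\<dots> \<le> (\<Sum>k\<in>UNIV. \<bar>T k s\<bar> * norm (\<nu> k))"
      by (rule norm_sum[THEN order_trans]) simp
    also have "\<dots> \<le> (\<Sum>k\<in>UNIV. (\<epsilon> + t * \<delta> + L * \<phi> * (exp (\<kappa> * s) - 1) / \<kappa>) * norm (\<nu> k))"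
    proof (intro sum_mono mult_right_mono norm_ge_zero)
      fix k
      show "\<bar>T k s\<bar> \<le> \<epsilon> + t * \<delta> + L * \<phi> * (exp (\<kappa> * s) - 1) / \<kappa>"
        using T_le[OF envelope s, of k] s mult_right_mono[of s t \<delta>] \<open>0 \<le> \<delta>\<close> by auto
    qed
    also have "\<dots> = (\<epsilon> + t * \<delta> + L * \<phi> * (exp (\<kappa> * s) - 1) / \<kappa>) * V"
      unfolding V_def by (rule sum_distrib_left[symmetric])
    also have "\<dots> = V * (\<epsilon> + t * \<delta>) + V * L * \<phi> * (exp (\<kappa> * s) - 1) / \<kappa>"
      by (simp add: algebra_simps)
    finally show ?thesis .
  qed
  have "bdd_above ((\<lambda>u. norm (z u - X u)) ` {0..t})"
    using bdd unfolding bounded_iff bdd_above_def by fast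
  moreover have "0 \<le> V * (\<epsilon> + t * \<delta>)" "0 \<le> V * L"
    using V \<open>0 \<le> \<epsilon>\<close> \<open>0 \<le> \<delta>\<close> \<open>0 \<le> L\<close> s by auto
  ultimately have envelope: "norm (z u - X u) \<le> 2 * (V * (\<epsilon> + t * \<delta>)) * exp (\<kappa> * u)"
    if "u \<in> {0..t}" for u
    using exponential_envelope_gronwall[where D = "\<lambda>u. norm (z u - X u)", OF _ _ \<kappa> _ _ D_le that]
    by simp
  have "\<bar>T j s\<bar> \<le> (\<epsilon> + t * \<delta>) + (\<epsilon> + t * \<delta>) * (2 * (V * L) / \<kappa>) * (exp (\<kappa> * s) - 1)"
    using T_le[OF envelope s, of j] s mult_right_mono[of s t \<delta>] \<open>0 \<le> \<delta>\<close> by (auto simp: algebra_simps)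
  also have "\<dots> \<le> 2 * exp (\<kappa> * t) * (\<epsilon> + t * \<delta>)"
    using V \<kappa> s \<open>0 \<le> \<epsilon>\<close> \<open>0 \<le> \<delta>\<close> \<open>0 \<le> L\<close> by (intro gronwall_factor_le) auto
  finally show ?thesis
    by (simp add: T_def \<kappa>_def V_def)
qed

section \<open>The fluid limit\<close>

lemma time_changed_deviation_le:
  fixes y f :: "real \<Rightarrow> real" and N c \<eta> s t :: real
  assumes "0 < N" "s \<in> {0..t}" "0 \<le> c" "f integrable_on {0..s}"
    and f_range: "\<And>u. u \<in> {0..s} \<Longrightarrow> 0 \<le> f u \<and> f u / N \<le> c"
    and y_dev: "\<And>l. l \<in> {0..N * (c * t)} \<Longrightarrow> \<bar>y l - l\<bar> \<le> \<eta> * N"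
  shows "\<bar>y (integral {0..s} f) / N - integral {0..s} (\<lambda>u. f u / N)\<bar> \<le> \<eta>"
proof -
  have "integral {0..s} (\<lambda>u. f u / N) \<le> integral {0..s} (\<lambda>_. c)"
    using assms(4) f_range by (intro integral_le integrable_on_divide) auto
  also have "\<dots> \<le> c * t"
    using assms(2,3) by (simp add: mult_left_mono mult.commute)
  finally have "integral {0..s} f \<in> {0..N * (c * t)}"
    using integral_nonneg[OF assms(4)] f_range \<open>0 < N\<close> by (auto simp: field_simps)
  then have "\<bar>y (integral {0..s} f) - integral {0..s} f\<bar> / N \<le> \<eta>"
    using y_dev \<open>0 < N\<close> by (simp add: divide_le_eq)
  then show ?thesis
    using \<open>0 < N\<close> by (simp add: diff_divide_distrib[symmetric] abs_divide)
qed

lemma continuous_derivative_imp_lipschitz_on: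
  fixes f :: "'a::real_normed_vector \<Rightarrow> 'b::real_normed_vector" and D :: "'a \<Rightarrow> 'a \<Rightarrow>\<^sub>L 'b"
  assumes "\<And>x. (f has_derivative blinfun_apply (D x)) (at x)" "continuous_on UNIV D"
    and "compact C" "convex C"
  shows "\<exists>L. L-lipschitz_on C f"
proof -
  have "compact (D ` C)"
    using assms(2,3) by (intro compact_continuous_image) (auto intro: continuous_on_subset)
  then obtain B where "\<And>x. x \<in> C \<Longrightarrow> norm (D x) \<le> B"
    by (metis bounded_iff compact_imp_bounded imageI)
  then have "(max B 0)-lipschitz_on C f"
    using assms(1,4)
    by (intro bounded_derivative_imp_lipschitz[where f' = "\<lambda>x. blinfun_apply (D x)"])
      (auto intro: has_derivative_at_withinI simp: le_max_iff_disj simp flip: norm_blinfun.rep_eq)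
  then show ?thesis ..
qed

lemma finite_family_lipschitz_on:
  fixes f :: "'k::finite \<Rightarrow> 'a::metric_space \<Rightarrow> 'b::metric_space"
  assumes "\<And>k. \<exists>L. lipschitz_on L C (f k)"
  shows "\<exists>L. \<forall>k. lipschitz_on L C (f k)"
proof -
  obtain L where L: "\<And>k. lipschitz_on (L k) C (f k)"
    using assms by metis
  have "L k \<le> (\<Sum>k\<in>UNIV. L k)" for k
    using L lipschitz_on_nonneg by (intro member_le_sum) auto
  then have "\<forall>k. lipschitz_on (\<Sum>k\<in>UNIV. L k) C (f k)"
    using L lipschitz_on_le by blast
  then show ?thesis ..
qed

lemma finite_family_bounded_on_compact:
  fixes f :: "'k::finite \<Rightarrow> 'a::topological_space \<Rightarrow> 'b::real_normed_vector"
  assumes "compact K" "\<And>k. continuous_on K (f k)"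
  shows "\<exists>A. \<forall>k. \<forall>x\<in>K. norm (f k x) \<le> A"
proof -
  have "bounded (\<Union>k. f k ` K)"
    using assms by (auto intro!: bounded_UN compact_imp_bounded compact_continuous_image)
  then show ?thesis
    unfolding bounded_iff by blast
qed

lemma continuous_derivative_family_lipschitz_on_bounded:
  fixes f :: "'k::finite \<Rightarrow> 'a::euclidean_space \<Rightarrow> 'b::real_normed_vector"
  assumes "\<forall>k. \<exists>D :: 'a \<Rightarrow> 'a \<Rightarrow>\<^sub>L 'b.
      (\<forall>x. (f k has_derivative blinfun_apply (D x)) (at x)) \<and> continuous_on UNIV D"
    and "bounded T"
  shows "\<exists>C L. T \<subseteq> C \<and> bounded C \<and> (\<forall>k. L-lipschitz_on C (f k))"
proof -
  obtain x r where r: "T \<subseteq> cball x r"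
    using \<open>bounded T\<close> unfolding bounded_subset_cball by blast
  have "\<exists>L. L-lipschitz_on (cball x r) (f k)" for k
    using assms(1) continuous_derivative_imp_lipschitz_on[OF _ _ compact_cball convex_cball] by metis
  then obtain L where "\<And>k. L-lipschitz_on (cball x r) (f k)"
    using finite_family_lipschitz_on by blast
  then show ?thesis
    using r by blast
qed

lemma scaled_path_deviation_bound:
  fixes \<nu> :: "'m::finite \<Rightarrow> 'v::real_normed_vector" and aN :: "'m \<Rightarrow> 'v \<Rightarrow> real"
    and a :: "'m \<Rightarrow> 'v \<Rightarrow> real" and x0 :: 'v and y :: "'m \<Rightarrow> real \<Rightarrow> real"
    and xN X :: "real \<Rightarrow> 'v" and K C :: "'v set" and N :: nat and A B L \<eta> t s :: real and j :: 'm
  assumes N: "1 \<le> N" and "0 \<le> \<eta>" "0 \<le> B"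
    and xN_eq: "\<And>s. 0 \<le> s \<Longrightarrow> (\<forall>k. (\<lambda>u. aN k (xN u)) integrable_on {0..s}) \<and>
        xN s = real N *\<^sub>R x0 + (\<Sum>k\<in>UNIV. y k (integral {0..s} (\<lambda>u. aN k (xN u))) *\<^sub>R \<nu> k)"
    and aN_nonneg: "\<And>k u. 0 \<le> u \<Longrightarrow> 0 \<le> aN k (xN u)"
    and xN_K: "\<And>u. 0 \<le> u \<Longrightarrow> xN u /\<^sub>R real N \<in> K"
    and K_rate: "\<And>k x. x \<in> K \<Longrightarrow> \<bar>aN k (real N *\<^sub>R x) / real N - a k x\<bar> \<le> B / real N"
    and K_bdd: "\<And>k x. x \<in> K \<Longrightarrow> \<bar>a k x\<bar> \<le> A"
    and lip: "\<And>k. L-lipschitz_on C (a k)" and "bounded C" and "K \<subseteq> C" and X_C: "X ` {0..t} \<subseteq> C"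
    and X_eq: "\<And>s. 0 \<le> s \<Longrightarrow> X s = x0 + (\<Sum>k\<in>UNIV. integral {0..s} (\<lambda>u. a k (X u)) *\<^sub>R \<nu> k)"
    and aX_int: "\<And>k s. s \<in> {0..t} \<Longrightarrow> (\<lambda>u. a k (X u)) integrable_on {0..s}"
    and y_dev: "\<And>k l. l \<in> {0..real N * ((A + B) * t)} \<Longrightarrow> \<bar>y k l - l\<bar> \<le> \<eta> * real N"
    and s: "s \<in> {0..t}"
  shows "\<bar>y j (integral {0..s} (\<lambda>u. aN j (xN u))) / real N - integral {0..s} (\<lambda>u. a j (X u))\<bar>
    \<le> 2 * exp ((2 * (\<Sum>k\<in>UNIV. norm (\<nu> k)) * L + 1) * t) * (\<eta> + t * (B / real N))"
proof -
  define z where "z u = xN u /\<^sub>R real N" for u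
  define g where "g k u = aN k (xN u) / real N" for k u
  have N_pos: "0 < real N"
    using N by simp
  have aN_a: "\<bar>aN k (xN u) / real N - a k (z u)\<bar> \<le> B / real N" if "0 \<le> u" for k u
    using K_rate[OF xN_K[OF that], of k] N_pos by (simp add: z_def)
  have a_bdd: "\<bar>a k (z u)\<bar> \<le> A" if "0 \<le> u" for k u
    using K_bdd[OF xN_K[OF that]] by (simp add: z_def)
  have z_C: "z u \<in> C" if "0 \<le> u" for u
    using xN_K[OF that] \<open>K \<subseteq> C\<close> by (auto simp: z_def)
  have g_int: "g k integrable_on {0..s}" if "s \<in> {0..t}" for k s
    using xN_eq[of s] that unfolding g_def by (auto intro: integrable_on_divide)
  have A_B: "0 \<le> A + B"
    using order_trans[OF abs_ge_zero a_bdd[of 0]] \<open>0 \<le> B\<close> by simp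
  have "B / real N \<le> B"
    using N \<open>0 \<le> B\<close> by (simp add: divide_le_eq mult_le_cancel_left1)
  then have "0 \<le> aN k (xN u) \<and> aN k (xN u) / real N \<le> A + B" if "0 \<le> u" for k u
    using aN_nonneg[OF that] aN_a[OF that, of k] a_bdd[OF that, of k] unfolding abs_le_iff by auto
  then have R_g: "\<bar>y k (integral {0..s} (\<lambda>u. aN k (xN u))) / real N - integral {0..s} (g k)\<bar> \<le> \<eta>"
    if "s \<in> {0..t}" for k s
    using that N_pos A_B xN_eq[of s] y_dev unfolding g_def
    by (intro time_changed_deviation_le[where t = t and c = "A + B"]) auto
  have "bounded (z ` {0..t})" "bounded (X ` {0..t})"
    using bounded_subset[OF \<open>bounded C\<close>] z_C X_C by (auto simp: image_subset_iff)
  then have bdd: "bounded ((\<lambda>u. z u - X u) ` {0..t})"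
    by (rule bounded_minus_comp)
  have z_eq: "z s = x0 + (\<Sum>k\<in>UNIV. (y k (integral {0..s} (\<lambda>u. aN k (xN u))) / real N) *\<^sub>R \<nu> k)"
    if "s \<in> {0..t}" for s
    using xN_eq[of s] that N_pos
    by (simp add: z_def scaleR_add_right scaleR_sum_right divide_inverse_commute)
  have lip_path: "\<bar>a k (z u) - a k (X u)\<bar> \<le> L * norm (z u - X u)" if "u \<in> {0..t}" for k u
    using lipschitz_on_normD[OF lip z_C[of u]] X_C that by (auto simp: image_subset_iff)
  have g_a: "\<bar>g k u - a k (z u)\<bar> \<le> B / real N" if "u \<in> {0..t}" for k u
    using aN_a[of u k] that by (simp add: g_def)
  have X_eq': "X s = x0 + (\<Sum>k\<in>UNIV. integral {0..s} (\<lambda>u. a k (X u)) *\<^sub>R \<nu> k)" if "s \<in> {0..t}" for s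
    using X_eq that by simp
  show ?thesis
    by (rule integral_equation_stability[where z = z and g = g
          and R = "\<lambda>k s. y k (integral {0..s} (\<lambda>u. aN k (xN u))) / real N",
          OF \<open>0 \<le> \<eta>\<close> _ lipschitz_on_nonneg[OF lip] z_eq X_eq' g_int aX_int R_g g_a lip_path bdd s])
      (use \<open>0 \<le> B\<close> in simp)
qed

lemma Zplus_subset_Rplus: "Zplus \<subseteq> Rplus"
  unfolding Zplus_def Rplus_def by (auto simp: Nats_def image_iff) (metis of_nat_0_le_iff)

lemma closed_Rplus: "closed Rplus"
  unfolding Rplus_def by (intro closed_Collect_all closed_Collect_le continuous_intros)

lemma fluid_limit_deviation_bound:
  fixes \<nu> :: "'m::finite \<Rightarrow> real ^ 'n" and aN :: "nat \<Rightarrow> 'm \<Rightarrow> real ^ 'n \<Rightarrow> real"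
    and a :: "'m \<Rightarrow> real ^ 'n \<Rightarrow> real" and x0 :: "real ^ 'n" and y :: "'m \<Rightarrow> real \<Rightarrow> real"
    and xN :: "nat \<Rightarrow> real \<Rightarrow> real ^ 'n" and X :: "real \<Rightarrow> real ^ 'n"
    and j :: 'm and t \<Gamma> :: real and S :: "nat set"
  assumes aN_nonneg: "\<forall>N k. \<forall>x\<in>Zplus. 0 \<le> aN N k x"
    and a_rate: "\<forall>K. compact K \<and> K \<subseteq> Rplus \<longrightarrow>
        (\<exists>B>0. \<forall>x\<in>K. \<forall>N\<ge>1. \<forall>k. \<bar>aN N k (real N *\<^sub>R x) / real N - a k x\<bar> \<le> B / real N)"
    and a_C1: "\<forall>k. \<exists>D :: (real ^ 'n) \<Rightarrow> ((real ^ 'n) \<Rightarrow>\<^sub>L real).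
        (\<forall>x. (a k has_derivative blinfun_apply (D x)) (at x)) \<and> continuous_on UNIV D"
    and S_ge_1: "\<forall>N\<in>S. 1 \<le> N"
    and xN_state: "\<forall>N\<in>S. \<forall>s\<ge>0. xN N s \<in> Zplus"
    and xN_eq: "\<forall>N\<in>S. \<forall>s\<ge>0. (\<forall>k. (\<lambda>u. aN N k (xN N u)) integrable_on {0..s}) \<and>
        xN N s = real N *\<^sub>R x0 + (\<Sum>k\<in>UNIV. y k (integral {0..s} (\<lambda>u. aN N k (xN N u))) *\<^sub>R \<nu> k)"
    and xN_bdd: "\<forall>N\<in>S. \<forall>s\<ge>0. norm (xN N s /\<^sub>R real N) \<le> \<Gamma>"
    and X_cont: "continuous_on {0..} X"
    and X_eq: "\<forall>s\<ge>0. X s = x0 + (\<Sum>k\<in>UNIV. integral {0..s} (\<lambda>u. a k (X u)) *\<^sub>R \<nu> k)"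
    and "0 \<le> t"
  shows "\<exists>Q c B. 0 < Q \<and> 0 \<le> c \<and> (\<forall>N\<in>S. \<forall>\<eta>\<ge>0.
    (\<forall>k. \<forall>l\<in>{0..real N * c}. \<bar>y k l - l\<bar> \<le> \<eta> * real N) \<longrightarrow> (\<forall>s\<in>{0..t}.
      \<bar>y j (integral {0..s} (\<lambda>u. aN N j (xN N u))) / real N - integral {0..s} (\<lambda>u. a j (X u))\<bar>
        \<le> Q * (\<eta> + B / real N)))"
proof -
  define K :: "(real ^ 'n) set" where "K = cball 0 \<Gamma> \<inter> Rplus"
  have K: "compact K" "K \<subseteq> Rplus"
    unfolding K_def by (auto intro: closed_Rplus)
  then obtain B where "B > 0" and B: "\<And>x N k. x \<in> K \<Longrightarrow> 1 \<le> N \<Longrightarrow>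
      \<bar>aN N k (real N *\<^sub>R x) / real N - a k x\<bar> \<le> B / real N"
    using a_rate[rule_format, OF conjI[OF K]] by auto
  have a_cont: "continuous_on UNIV (a k)" for k
    using a_C1 has_derivative_continuous by (blast intro: continuous_at_imp_continuous_on)
  have "\<exists>A. \<forall>k. \<forall>x\<in>K. norm (a k x) \<le> A"
    using a_cont by (intro finite_family_bounded_on_compact[OF K(1)]) (auto intro: continuous_on_subset)
  then obtain A where A: "\<And>k x. x \<in> K \<Longrightarrow> \<bar>a k x\<bar> \<le> A"
    by auto
  have "compact (X ` {0..t})"
    using X_cont by (intro compact_continuous_image) (auto intro: continuous_on_subset)
  then obtain C L where C: "K \<union> X ` {0..t} \<subseteq> C" "bounded C" and L: "\<And>k. L-lipschitz_on C (a k)"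
    using continuous_derivative_family_lipschitz_on_bounded[OF a_C1, of "K \<union> X ` {0..t}"] K(1)
    by (auto simp: compact_imp_bounded)
  have in_K: "xN N u /\<^sub>R real N \<in> K" if "N \<in> S" "0 \<le> u" for N u
    using xN_bdd[rule_format, OF that] Zplus_subset_Rplus xN_state[rule_format, OF that]
    by (auto simp: K_def Rplus_def)
  have aX_int: "(\<lambda>u. a k (X u)) integrable_on {0..s}" if "s \<in> {0..t}" for k s
    using that a_cont X_cont
    by (intro integrable_continuous_real continuous_on_compose2[of UNIV "a k" _ X])
      (auto intro: continuous_on_subset)
  define Q where "Q = 2 * exp ((2 * (\<Sum>k\<in>UNIV. norm (\<nu> k)) * L + 1) * t)"
  have "\<bar>y j (integral {0..s} (\<lambda>u. aN N j (xN N u))) / real N - integral {0..s} (\<lambda>u. a j (X u))\<bar>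
      \<le> Q * (\<eta> + t * (B / real N))"
    if N: "N \<in> S" and "0 \<le> \<eta>"
      and y_dev: "\<forall>k. \<forall>l\<in>{0..real N * ((\<bar>A\<bar> + B) * t)}. \<bar>y k l - l\<bar> \<le> \<eta> * real N"
      and "s \<in> {0..t}" for N \<eta> s
    unfolding Q_def
  proof (rule scaled_path_deviation_bound[where A = "\<bar>A\<bar>" and K = K and C = C,
        OF S_ge_1[rule_format, OF N] \<open>0 \<le> \<eta>\<close> less_imp_le[OF \<open>0 < B\<close>] xN_eq[rule_format, OF N] _
        in_K[OF N] B[OF _ S_ge_1[rule_format, OF N]] _ L \<open>bounded C\<close> _ _ _ aX_int _ \<open>s \<in> {0..t}\<close>])
    show "0 \<le> aN N k (xN N u)" if "0 \<le> u" for k u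
      using aN_nonneg xN_state N that by blast
    show "\<bar>a k x\<bar> \<le> \<bar>A\<bar>" if "x \<in> K" for k x
      using A[OF that, of k] by linarith
    show "K \<subseteq> C" "X ` {0..t} \<subseteq> C"
      using C(1) by auto
    show "X s = x0 + (\<Sum>k\<in>UNIV. integral {0..s} (\<lambda>u. a k (X u)) *\<^sub>R \<nu> k)" if "0 \<le> s" for s
      using X_eq that by blast
    show "\<bar>y k l - l\<bar> \<le> \<eta> * real N" if "l \<in> {0..real N * ((\<bar>A\<bar> + B) * t)}" for k l
      using y_dev that by blast
  qed
  moreover have "0 < Q" "0 \<le> (\<bar>A\<bar> + B) * t"
    using \<open>0 < B\<close> \<open>0 \<le> t\<close> by (simp_all add: Q_def)
  ultimately show ?thesis
    unfolding times_divide_eq_right by blast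
qed

lemma abs_SUP_abs_le:
  fixes f :: "'a \<Rightarrow> real"
  assumes "T \<noteq> {}" and le: "\<And>s. s \<in> T \<Longrightarrow> \<bar>f s\<bar> \<le> c"
  shows "\<bar>SUP s\<in>T. \<bar>f s\<bar>\<bar> \<le> c"
proof -
  obtain s0 where "s0 \<in> T"
    using assms(1) by blast
  moreover have "bdd_above ((\<lambda>s. \<bar>f s\<bar>) ` T)"
    using le by (intro bdd_aboveI2)
  ultimately have "0 \<le> (SUP s\<in>T. \<bar>f s\<bar>)"
    using cSUP_upper2[of "\<lambda>s. \<bar>f s\<bar>" T s0 0] by simp
  moreover have "(SUP s\<in>T. \<bar>f s\<bar>) \<le> c"
    using assms by (intro cSUP_least)
  ultimately show ?thesis
    by simp
qed

lemma fluid_limit_pathwise: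
  fixes \<nu> :: "'m::finite \<Rightarrow> real ^ 'n" and aN :: "nat \<Rightarrow> 'm \<Rightarrow> real ^ 'n \<Rightarrow> real"
    and a :: "'m \<Rightarrow> real ^ 'n \<Rightarrow> real" and x0 :: "real ^ 'n" and y :: "'m \<Rightarrow> real \<Rightarrow> real"
    and xN :: "nat \<Rightarrow> real \<Rightarrow> real ^ 'n" and X :: "real \<Rightarrow> real ^ 'n"
    and j :: 'm and t \<Gamma> :: real and S :: "nat set"
  assumes aN_nonneg: "\<forall>N k. \<forall>x\<in>Zplus. 0 \<le> aN N k x"
    and a_rate: "\<forall>K. compact K \<and> K \<subseteq> Rplus \<longrightarrow>
        (\<exists>B>0. \<forall>x\<in>K. \<forall>N\<ge>1. \<forall>k. \<bar>aN N k (real N *\<^sub>R x) / real N - a k x\<bar> \<le> B / real N)"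
    and a_C1: "\<forall>k. \<exists>D :: (real ^ 'n) \<Rightarrow> ((real ^ 'n) \<Rightarrow>\<^sub>L real).
        (\<forall>x. (a k has_derivative blinfun_apply (D x)) (at x)) \<and> continuous_on UNIV D"
    and y_lln: "\<forall>k. (\<lambda>n. y k (real n) / real n) \<longlonglongrightarrow> 1" and y_mono: "\<forall>k. mono_on {0..} (y k)"
    and S_ge_1: "\<forall>N\<in>S. 1 \<le> N"
    and xN_state: "\<forall>N\<in>S. \<forall>s\<ge>0. xN N s \<in> Zplus"
    and xN_eq: "\<forall>N\<in>S. \<forall>s\<ge>0. (\<forall>k. (\<lambda>u. aN N k (xN N u)) integrable_on {0..s}) \<and>
        xN N s = real N *\<^sub>R x0 + (\<Sum>k\<in>UNIV. y k (integral {0..s} (\<lambda>u. aN N k (xN N u))) *\<^sub>R \<nu> k)"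
    and xN_bdd: "\<forall>N\<in>S. \<forall>s\<ge>0. norm (xN N s /\<^sub>R real N) \<le> \<Gamma>"
    and X_cont: "continuous_on {0..} X"
    and X_eq: "\<forall>s\<ge>0. X s = x0 + (\<Sum>k\<in>UNIV. integral {0..s} (\<lambda>u. a k (X u)) *\<^sub>R \<nu> k)"
    and "0 < t"
  shows "filterlim (\<lambda>N. SUP s\<in>{0..t}.
      \<bar>y j (integral {0..s} (\<lambda>u. aN N j (xN N u))) / real N - integral {0..s} (\<lambda>u. a j (X u))\<bar>)
    (nhds 0) (inf sequentially (principal S))"
proof -
  obtain Q c B where "0 < Q" "0 \<le> c" and bound: "\<forall>N\<in>S. \<forall>\<eta>\<ge>0.
    (\<forall>k. \<forall>l\<in>{0..real N * c}. \<bar>y k l - l\<bar> \<le> \<eta> * real N) \<longrightarrow> (\<forall>s\<in>{0..t}.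
      \<bar>y j (integral {0..s} (\<lambda>u. aN N j (xN N u))) / real N - integral {0..s} (\<lambda>u. a j (X u))\<bar>
        \<le> Q * (\<eta> + B / real N))"
    using fluid_limit_deviation_bound[where j = j, OF aN_nonneg a_rate a_C1 S_ge_1 xN_state xN_eq xN_bdd
        X_cont X_eq less_imp_le[OF \<open>0 < t\<close>]]
    by blast
  show ?thesis
  proof (rule tendstoI)
    fix \<epsilon> :: real
    assume "0 < \<epsilon>"
    define \<eta> where "\<eta> = \<epsilon> / (4 * Q)"
    have \<eta>: "0 < \<eta>" "Q * (\<eta> + \<eta>) < \<epsilon>"
      using \<open>0 < \<epsilon>\<close> \<open>0 < Q\<close> by (auto simp: \<eta>_def field_simps)
    have "eventually (\<lambda>N. \<forall>k. \<forall>l\<in>{0..real N * c}. \<bar>y k l - l\<bar> \<le> \<eta> * real N) sequentially"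
      using y_mono y_lln \<open>0 \<le> c\<close> \<eta>(1)
      by (intro eventually_all_finite mono_uniform_sublinear_deviation) auto
    moreover have "eventually (\<lambda>N. B / real N < \<eta>) sequentially"
      using tendsto_divide_0[OF tendsto_const filterlim_at_top_imp_at_infinity[OF filterlim_real_sequentially]]
        \<eta>(1) by (rule order_tendstoD(2))
    ultimately show "eventually (\<lambda>N. dist (SUP s\<in>{0..t}.
      \<bar>y j (integral {0..s} (\<lambda>u. aN N j (xN N u))) / real N - integral {0..s} (\<lambda>u. a j (X u))\<bar>) 0 < \<epsilon>)
      (inf sequentially (principal S))"
      unfolding eventually_inf_principal
    proof eventually_elim
      case (elim N)
      show ?case
      proof
        assume "N \<in> S"
        have "\<bar>y j (integral {0..s} (\<lambda>u. aN N j (xN N u))) / real N - integral {0..s} (\<lambda>u. a j (X u))\<bar>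
            \<le> Q * (\<eta> + \<eta>)" if "s \<in> {0..t}" for s
        proof -
          have "\<bar>y j (integral {0..s} (\<lambda>u. aN N j (xN N u))) / real N - integral {0..s} (\<lambda>u. a j (X u))\<bar>
              \<le> Q * (\<eta> + B / real N)"
            using bound[rule_format, OF \<open>N \<in> S\<close> less_imp_le[OF \<eta>(1)]] elim(1) that by blast
          also have "\<dots> \<le> Q * (\<eta> + \<eta>)"
            using elim(2) \<open>0 < Q\<close> by (intro mult_left_mono) auto
          finally show ?thesis .
        qed
        then have "\<bar>SUP s\<in>{0..t}. \<bar>y j (integral {0..s} (\<lambda>u. aN N j (xN N u))) / real N
            - integral {0..s} (\<lambda>u. a j (X u))\<bar>\<bar> \<le> Q * (\<eta> + \<eta>)"
          using \<open>0 < t\<close> by (intro abs_SUP_abs_le) auto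
        then show "dist (SUP s\<in>{0..t}. \<bar>y j (integral {0..s} (\<lambda>u. aN N j (xN N u))) / real N
            - integral {0..s} (\<lambda>u. a j (X u))\<bar>) 0 < \<epsilon>"
          using \<eta>(2) by (simp add: dist_real_def)
      qed
    qed
  qed
qed

theorem lemma3p3:
  fixes M :: "'w measure"
    and \<nu> :: "'m::finite \<Rightarrow> real ^ 'n"
    and c :: "'m \<Rightarrow> real"
    and aN bN :: "nat \<Rightarrow> 'm \<Rightarrow> real ^ 'n \<Rightarrow> real"
    and a :: "'m \<Rightarrow> real ^ 'n \<Rightarrow> real"
    and x0 :: "real ^ 'n"
    and Y :: "'m \<Rightarrow> 'w \<Rightarrow> real \<Rightarrow> real"
    and XN :: "nat \<Rightarrow> 'w \<Rightarrow> real \<Rightarrow> real ^ 'n"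
    and X :: "real \<Rightarrow> real ^ 'n"
    and j :: 'm and t :: real
  assumes nu_int: "\<forall>k i. \<nu> k $ i \<in> \<int>"
    and c_pos: "\<forall>k. c k > 0"
    and aN_def: "\<forall>N k x. aN N k x = c k * bN N k x"
    and bN_nonneg: "\<forall>N k. \<forall>x\<in>Zplus. bN N k x \<ge> 0"
    and a_lim: "\<forall>k. \<forall>x\<in>Rplus. (\<lambda>N. aN N k (real N *\<^sub>R x) / real N) \<longlonglongrightarrow> a k x"
    and a_rate: "\<forall>K. compact K \<and> K \<subseteq> Rplus \<longrightarrow>
        (\<exists>B>0. \<forall>x\<in>K. \<forall>N\<ge>1. \<forall>k. \<bar>aN N k (real N *\<^sub>R x) / real N - a k x\<bar> \<le> B / real N)"
    and a_C1: "\<forall>k. \<exists>D :: (real ^ 'n) \<Rightarrow> ((real ^ 'n) \<Rightarrow>\<^sub>L real).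
        (\<forall>x. (a k has_derivative blinfun_apply (D x)) (at x)) \<and> continuous_on UNIV D"
    and x0_pos: "x0 \<in> Rplus"
    and M_prob: "prob_space M"
    and Y_poisson: "\<forall>k. unit_poisson_process M (Y k)"
    and Y_indep: "prob_space.indep_vars M (\<lambda>_. Pi\<^sub>M {0..} (\<lambda>_. borel))
        (\<lambda>k \<omega>. restrict (Y k \<omega>) {0..}) UNIV"
    and XN_state: "\<forall>N. N \<ge> 1 \<and> real N *\<^sub>R x0 \<in> Zplus \<longrightarrow>
        (AE \<omega> in M. \<forall>s\<ge>0. XN N \<omega> s \<in> Zplus)"
    and XN_eq: "\<forall>N. N \<ge> 1 \<and> real N *\<^sub>R x0 \<in> Zplus \<longrightarrow>
        (AE \<omega> in M. \<forall>s\<ge>0. (\<forall>k. (\<lambda>u. aN N k (XN N \<omega> u)) integrable_on {0..s}) \<and>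
           XN N \<omega> s = real N *\<^sub>R x0
             + (\<Sum>k\<in>UNIV. Y k \<omega> (integral {0..s} (\<lambda>u. aN N k (XN N \<omega> u))) *\<^sub>R \<nu> k))"
    and XN_bdd: "\<exists>\<Gamma>. \<forall>N. N \<ge> 1 \<and> real N *\<^sub>R x0 \<in> Zplus \<longrightarrow>
        (AE \<omega> in M. \<forall>s\<ge>0. norm (XN N \<omega> s /\<^sub>R real N) \<le> \<Gamma>)"
    and X_cont: "continuous_on {0..} X"
    and X_eq: "\<forall>s\<ge>0. X s = x0 + (\<Sum>k\<in>UNIV. integral {0..s} (\<lambda>u. a k (X u)) *\<^sub>R \<nu> k)"
    and t_pos: "t > 0"
  shows "AE \<omega> in M.
    filterlim (\<lambda>N. SUP s\<in>{0..t}.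
        \<bar>Y j \<omega> (integral {0..s} (\<lambda>u. aN N j (XN N \<omega> u))) / real N
          - integral {0..s} (\<lambda>u. a j (X u))\<bar>)
      (nhds 0) (inf sequentially (principal {N. N \<ge> 1 \<and> real N *\<^sub>R x0 \<in> Zplus}))"
proof -
  define S where "S = {N. N \<ge> 1 \<and> real N *\<^sub>R x0 \<in> Zplus}"
  have aN_nonneg: "\<forall>N k. \<forall>x\<in>Zplus. 0 \<le> aN N k x"
    using aN_def c_pos bN_nonneg by (simp add: less_imp_le)
  obtain \<Gamma> where \<Gamma>: "\<forall>N\<in>S. AE \<omega> in M. \<forall>s\<ge>0. norm (XN N \<omega> s /\<^sub>R real N) \<le> \<Gamma>"
    using XN_bdd unfolding S_def by blast
  have S_ge_1: "\<forall>N\<in>S. 1 \<le> N"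
    by (simp add: S_def)
  have "AE \<omega> in M. \<forall>k. (\<lambda>n. Y k \<omega> (real n) / real n) \<longlonglongrightarrow> 1"
    unfolding AE_all_countable using unit_poisson_process_lln M_prob Y_poisson by blast
  moreover have "AE \<omega> in M. \<forall>k. mono_on {0..} (Y k \<omega>)"
    using Y_poisson unfolding unit_poisson_process_def by (intro AE_I2) blast
  moreover have "AE \<omega> in M. \<forall>N\<in>S. \<forall>s\<ge>0. XN N \<omega> s \<in> Zplus"
    using XN_state unfolding S_def by (intro AE_ball_countable') simp_all
  moreover have "AE \<omega> in M. \<forall>N\<in>S. \<forall>s\<ge>0. (\<forall>k. (\<lambda>u. aN N k (XN N \<omega> u)) integrable_on {0..s}) \<and>
      XN N \<omega> s = real N *\<^sub>R x0 + (\<Sum>k\<in>UNIV. Y k \<omega> (integral {0..s} (\<lambda>u. aN N k (XN N \<omega> u))) *\<^sub>R \<nu> k)"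
    using XN_eq unfolding S_def by (intro AE_ball_countable') simp_all
  moreover have "AE \<omega> in M. \<forall>N\<in>S. \<forall>s\<ge>0. norm (XN N \<omega> s /\<^sub>R real N) \<le> \<Gamma>"
    using \<Gamma> by (intro AE_ball_countable') simp_all
  ultimately show ?thesis
    unfolding S_def[symmetric]
  proof eventually_elim
    case (elim \<omega>)
    show ?case
      by (rule fluid_limit_pathwise[OF aN_nonneg a_rate a_C1 elim(1,2) S_ge_1 elim(3-5) X_cont X_eq t_pos])
  qed
qed

end
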